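(* Let $n\ge2$, let $x_1,\dots,x_l\in\mathbb{C}$ be pairwise distinct, and for each $i$ let $e^i_1,\dots,e^i_{r_i}$ be positive integers with $m_i=\sum_j e^i_j$ and $\sum_i m_i=n$, such that at least one $e^i_j>1$. Let $\mathcal{P}=\bigoplus_{i,j}M^{e^i_j}(x_i)$ and let $\mathcal{P}'=\bigoplus_i\bigoplus_{j'=1}^{m_i}M^1(x_i)$ be the diagonal pencil obtained from $\mathcal{P}$ by deleting all off-diagonal entries. Let $|\psi\rangle$, $|\psi'\rangle\in\mathbb{C}^2\otimes\mathbb{C}^n\otimes\mathbb{C}^n$ be the states corresponding to $\mathcal{P}$ and $\mathcal{P}'$, and let $\mathcal{C}=G|\psi\rangle$ be the SLOCC class of $|\psi\rangle$. Then: (i) if $|\psi'\rangle$ is semistable, then $\mathcal{C}$ is strictly semistable; (ii) if $|\psi'\rangle$ is in the null-cone, then $\mathcal{C}$ is in the null-cone.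
   Context: $G=SL(2,\mathbb{C})\times SL(n,\mathbb{C})\times SL(n,\mathbb{C})$ acts by $A\otimes B\otimes C$. To an $n\times n$ matrix pencil $\mathcal{P}=\mu R+\lambda S$ ($R,S$ complex $n\times n$ matrices, $\lambda,\mu$ formal variables) corresponds the state $|0\rangle\sum_{j,k}R_{jk}|j\rangle|k\rangle+|1\rangle\sum_{j,k}S_{jk}|j\rangle|k\rangle$. For $e\ge1$ and $x\in\mathbb{C}$, $M^e(x)$ is the $e\times e$ pencil with diagonal entries $x\mu+\lambda$, entries $\mu$ on the first superdiagonal, and zeros elsewhere. The null-cone is the set of vectors $|\phi\rangle$ with $0\in\overline{G|\phi\rangle}$ (standard topology); vectors outside it are semistable; a semistable vector is polystable if its orbit is closed, and strictly semistable if it is semistable but not polystable. *)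

theory Defs
  imports "HOL-Analysis.Function_Topology" "Jordan_Normal_Form.Jordan_Normal_Form"
begin

text \<open>A vector of C^2 (x) C^n (x) C^n is represented as a function T a j k with
  a < 2, j < n, k < n, vanishing outside this range.  The standard topology is the
  product topology on such functions (all other coordinates are identically zero).\<close>

definition tensor_act ::
  "nat \<Rightarrow> complex mat \<Rightarrow> complex mat \<Rightarrow> complex mat \<Rightarrow> (nat \<Rightarrow> nat \<Rightarrow> nat \<Rightarrow> complex)
     \<Rightarrow> (nat \<Rightarrow> nat \<Rightarrow> nat \<Rightarrow> complex)" where
  "tensor_act n A B C T = (\<lambda>a j k. if a < 2 \<and> j < n \<and> k < n then
      (\<Sum>a'<2. \<Sum>j'<n. \<Sum>k'<n. A $$ (a,a') * B $$ (j,j') * C $$ (k,k') * T a' j' k')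
     else 0)"

definition SLOCC_group :: "nat \<Rightarrow> (complex mat \<times> complex mat \<times> complex mat) set" where
  "SLOCC_group n = {(A, B, C). A \<in> carrier_mat 2 2 \<and> Determinant.det A = 1 \<and>
      B \<in> carrier_mat n n \<and> Determinant.det B = 1 \<and>
      C \<in> carrier_mat n n \<and> Determinant.det C = 1}"

definition SLOCC_orbit :: "nat \<Rightarrow> (nat \<Rightarrow> nat \<Rightarrow> nat \<Rightarrow> complex) \<Rightarrow> (nat \<Rightarrow> nat \<Rightarrow> nat \<Rightarrow> complex) set" where
  "SLOCC_orbit n T = (\<lambda>(A, B, C). tensor_act n A B C T) ` SLOCC_group n"

definition in_null_cone :: "nat \<Rightarrow> (nat \<Rightarrow> nat \<Rightarrow> nat \<Rightarrow> complex) \<Rightarrow> bool" where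
  "in_null_cone n T \<longleftrightarrow> (\<lambda>_ _ _. 0) \<in> closure (SLOCC_orbit n T)"

definition semistable :: "nat \<Rightarrow> (nat \<Rightarrow> nat \<Rightarrow> nat \<Rightarrow> complex) \<Rightarrow> bool" where
  "semistable n T \<longleftrightarrow> \<not> in_null_cone n T"

definition polystable :: "nat \<Rightarrow> (nat \<Rightarrow> nat \<Rightarrow> nat \<Rightarrow> complex) \<Rightarrow> bool" where
  "polystable n T \<longleftrightarrow> semistable n T \<and> closed (SLOCC_orbit n T)"

definition strictly_semistable :: "nat \<Rightarrow> (nat \<Rightarrow> nat \<Rightarrow> nat \<Rightarrow> complex) \<Rightarrow> bool" where
  "strictly_semistable n T \<longleftrightarrow> semistable n T \<and> \<not> polystable n T"

text \<open>State |0>(sum R_jk |j>|k>) + |1>(sum S_jk |j>|k>) of the n x n pencil mu R + lambda S.\<close>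
definition pencil_state :: "nat \<Rightarrow> complex mat \<Rightarrow> complex mat \<Rightarrow> (nat \<Rightarrow> nat \<Rightarrow> nat \<Rightarrow> complex)" where
  "pencil_state n R S = (\<lambda>a j k. if j < n \<and> k < n then
      (if a = 0 then R $$ (j,k) else if a = 1 then S $$ (j,k) else 0) else 0)"

text \<open>A pencil is a pair (R, S) representing mu R + lambda S.
  M^e(x) has mu-coefficient jordan_block e x (x on the diagonal, 1 on the first
  superdiagonal) and lambda-coefficient the identity.  Direct sums of M^{e_b}(x_b)
  for a list of blocks (e_b, x_b) are block-diagonal.\<close>
definition M_pencil_sum :: "(nat \<times> complex) list \<Rightarrow> complex mat \<times> complex mat" where
  "M_pencil_sum bs = (jordan_matrix bs, 1\<^sub>m (sum_list (map fst bs)))"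

end

theory Submission
  imports Defs "Jordan_Normal_Form.Jordan_Normal_Form_Uniqueness"
begin

(* Write J for the Jordan matrix of P, so that psi is the pencil mu J + lambda I and psi' is
   mu D + lambda I with D the diagonal part of J.  Acting by diag(s^-j) (x) diag(s^k), rescaled
   into SL(n) x SL(n), multiplies the (j,k) entry of both slices by s^(k-j); as s -> 0 this
   kills the superdiagonal, so G psi' lies in the closure of G psi, which gives (ii).
   No point of G psi is a diagonal pencil of the form mu D' + lambda I: solving the two slice
   equations for J would make J similar to a diagonal matrix, contradicting the uniqueness of
   the Jordan form.  So G psi is not closed.
   It remains to see that psi' is in the null cone if psi is.  If g psi = (X0, X1) is small,
   so is det (X0 + z X1) = prod_j (v0_j + z v1_j), where (v0_j, v1_j) = A (x_j, 1)^T.  A grid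
   point z in [0,1] keeps every factor above max |v_j| / 4n, so prod_j max |v_j| is small;
   scaling the rows of mu D + lambda I by r / max |v_j| with r^n = prod_j max |v_j| then gives
   a point of G psi' with entries of size at most r. *)

section \<open>Convergence of tensors and the null cone\<close>

lemma tendsto_tensor_iff:
  fixes f :: "'x \<Rightarrow> 'a \<Rightarrow> 'b \<Rightarrow> 'c \<Rightarrow> 'd::topological_space"
  shows "(f \<longlongrightarrow> T) F \<longleftrightarrow> (\<forall>a j k. ((\<lambda>x. f x a j k) \<longlongrightarrow> T a j k) F)"
proof -
  have fun_iff: "(g \<longlongrightarrow> l) F \<longleftrightarrow> (\<forall>i. ((\<lambda>x. g x i) \<longlongrightarrow> l i) F)"
    for g :: "'x \<Rightarrow> 'i \<Rightarrow> 'y::topological_space" and l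
    using limitin_componentwise[of "\<lambda>_. euclidean" UNIV g l F]
    by (simp add: euclidean_product_topology)
  show ?thesis by (simp add: fun_iff)
qed

lemma tendsto_tensor_act:
  assumes "(f \<longlongrightarrow> T) F"
  shows "((\<lambda>x. tensor_act n A B C (f x)) \<longlongrightarrow> tensor_act n A B C T) F"
  using assms unfolding tendsto_tensor_iff tensor_act_def
  by (auto intro!: tendsto_sum tendsto_mult_left)

lemma SLOCC_orbit_vanishes:
  assumes "T' \<in> SLOCC_orbit n T" "\<not> (a < 2 \<and> j < n \<and> k < n)"
  shows "T' a j k = 0"
  using assms by (auto simp: SLOCC_orbit_def tensor_act_def)

lemma in_null_cone_iff:
  "in_null_cone n T \<longleftrightarrow>
     (\<forall>\<eta>>0. \<exists>T'\<in>SLOCC_orbit n T. \<forall>a<2. \<forall>j<n. \<forall>k<n. cmod (T' a j k) < \<eta>)"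
proof
  assume "in_null_cone n T"
  then obtain X where X: "\<And>m. X m \<in> SLOCC_orbit n T" "X \<longlonglongrightarrow> (\<lambda>_ _ _. 0)"
    unfolding in_null_cone_def closure_sequential by blast
  show "\<forall>\<eta>>0. \<exists>T'\<in>SLOCC_orbit n T. \<forall>a<2. \<forall>j<n. \<forall>k<n. cmod (T' a j k) < \<eta>"
  proof (intro allI impI)
    fix \<eta> :: real assume "\<eta> > 0"
    then have "\<forall>a j k. eventually (\<lambda>m. cmod (X m a j k) < \<eta>) sequentially"
      using X(2) unfolding tendsto_tensor_iff tendsto_iff by (simp add: dist_norm)
    then have "eventually (\<lambda>m. \<forall>a\<in>{..<2}. \<forall>j\<in>{..<n}. \<forall>k\<in>{..<n}. cmod (X m a j k) < \<eta>) sequentially"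
      by (intro eventually_ball_finite ballI) auto
    then obtain m where "\<forall>a<2. \<forall>j<n. \<forall>k<n. cmod (X m a j k) < \<eta>"
      unfolding eventually_sequentially by blast
    then show "\<exists>T'\<in>SLOCC_orbit n T. \<forall>a<2. \<forall>j<n. \<forall>k<n. cmod (T' a j k) < \<eta>"
      using X(1) by blast
  qed
next
  assume small: "\<forall>\<eta>>0. \<exists>T'\<in>SLOCC_orbit n T. \<forall>a<2. \<forall>j<n. \<forall>k<n. cmod (T' a j k) < \<eta>"
  have "\<exists>T'\<in>SLOCC_orbit n T. \<forall>a<2. \<forall>j<n. \<forall>k<n. cmod (T' a j k) < 1 / real (Suc m)" for m
    using small[rule_format, of "1 / real (Suc m)"] by simp
  then obtain X where X: "\<forall>m. X m \<in> SLOCC_orbit n T \<and>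
      (\<forall>a<2. \<forall>j<n. \<forall>k<n. cmod (X m a j k) < 1 / real (Suc m))"
    by metis
  have "X \<longlonglongrightarrow> (\<lambda>_ _ _. 0)"
    unfolding tendsto_tensor_iff
  proof (intro allI)
    fix a j k
    show "(\<lambda>m. X m a j k) \<longlonglongrightarrow> 0"
    proof (cases "a < 2 \<and> j < n \<and> k < n")
      case True
      then show ?thesis using X by (intro LIMSEQ_norm_0) auto
    next
      case False
      then have "X m a j k = 0" for m
        using X SLOCC_orbit_vanishes by blast
      then show ?thesis by simp
    qed
  qed
  then show "in_null_cone n T"
    unfolding in_null_cone_def closure_sequential using X by blast
qed

section \<open>The action on pencil states\<close>

lemma index_mult_mult_transpose:
  assumes "B \<in> carrier_mat n n" "M \<in> carrier_mat n n" "C \<in> carrier_mat n n" "j < n" "k < n"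
  shows "(B * M * transpose_mat C) $$ (j,k) = (\<Sum>j'<n. \<Sum>k'<n. B $$ (j,j') * M $$ (j',k') * C $$ (k,k'))"
  using assms by (simp add: scalar_prod_def atLeast0LessThan sum_distrib_left sum_distrib_right mult.assoc)

lemma tensor_act_pencil_state:
  assumes "R \<in> carrier_mat n n" "S \<in> carrier_mat n n" "B \<in> carrier_mat n n" "C \<in> carrier_mat n n"
  shows "tensor_act n A B C (pencil_state n R S) =
    pencil_state n (B * (A $$ (0,0) \<cdot>\<^sub>m R + A $$ (0,1) \<cdot>\<^sub>m S) * transpose_mat C)
                   (B * (A $$ (1,0) \<cdot>\<^sub>m R + A $$ (1,1) \<cdot>\<^sub>m S) * transpose_mat C)"
proof (intro ext)
  fix a j k
  let ?M = "\<lambda>a. A $$ (a,0) \<cdot>\<^sub>m R + A $$ (a,1) \<cdot>\<^sub>m S"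
  show "tensor_act n A B C (pencil_state n R S) a j k =
      pencil_state n (B * ?M 0 * transpose_mat C) (B * ?M 1 * transpose_mat C) a j k"
  proof (cases "a < 2 \<and> j < n \<and> k < n")
    case True
    have "tensor_act n A B C (pencil_state n R S) a j k
        = (\<Sum>j'<n. \<Sum>k'<n. B $$ (j,j') * ?M a $$ (j',k') * C $$ (k,k'))"
    proof -
      have "(\<Sum>j'<n. \<Sum>k'<n. B $$ (j,j') * ?M a $$ (j',k') * C $$ (k,k'))
          = (\<Sum>j'<n. \<Sum>k'<n. B $$ (j,j') * (A $$ (a,0) * R $$ (j',k') + A $$ (a,1) * S $$ (j',k')) * C $$ (k,k'))"
        using assms by (intro sum.cong refl) auto
      also have "\<dots> = tensor_act n A B C (pencil_state n R S) a j k"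
        using True unfolding tensor_act_def pencil_state_def
        by (simp add: numeral_2_eq_2 lessThan_Suc sum.distrib algebra_simps sum_distrib_left)
      finally show ?thesis ..
    qed
    also have "\<dots> = (B * ?M a * transpose_mat C) $$ (j,k)"
      using True assms by (intro index_mult_mult_transpose[symmetric]) auto
    finally show ?thesis
      using True by (auto simp: pencil_state_def less_2_cases_iff)
  qed (auto simp: tensor_act_def pencil_state_def)
qed

lemma pencil_state_inject:
  assumes "R \<in> carrier_mat n n" "S \<in> carrier_mat n n" "R' \<in> carrier_mat n n" "S' \<in> carrier_mat n n"
  shows "pencil_state n R S = pencil_state n R' S' \<longleftrightarrow> R = R' \<and> S = S'"
proof
  assume eq: "pencil_state n R S = pencil_state n R' S'"
  have "R $$ (j,k) = R' $$ (j,k) \<and> S $$ (j,k) = S' $$ (j,k)" if "j < n" "k < n" for j k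
    using fun_cong[OF fun_cong[OF fun_cong[OF eq, of 0], of j], of k]
      fun_cong[OF fun_cong[OF fun_cong[OF eq, of 1], of j], of k] that
    by (simp add: pencil_state_def)
  with assms show "R = R' \<and> S = S'" by auto
qed simp

lemma mult_lincomb_mult_mat:
  fixes P R S Q :: "'a::comm_ring mat"
  assumes P: "P \<in> carrier_mat nr n" and R: "R \<in> carrier_mat n m" and S: "S \<in> carrier_mat n m"
    and Q: "Q \<in> carrier_mat m nc"
  shows "P * (c \<cdot>\<^sub>m R + d \<cdot>\<^sub>m S) * Q = c \<cdot>\<^sub>m (P * R * Q) + d \<cdot>\<^sub>m (P * S * Q)"
proof -
  have PR: "P * R \<in> carrier_mat nr m" and PS: "P * S \<in> carrier_mat nr m" using P R S by auto
  have "P * (c \<cdot>\<^sub>m R + d \<cdot>\<^sub>m S) = c \<cdot>\<^sub>m (P * R) + d \<cdot>\<^sub>m (P * S)"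
    by (simp only: mult_add_distrib_mat[OF P smult_carrier_mat[OF R] smult_carrier_mat[OF S]]
        mult_smult_distrib[OF P R] mult_smult_distrib[OF P S])
  also have "\<dots> * Q = c \<cdot>\<^sub>m (P * R * Q) + d \<cdot>\<^sub>m (P * S * Q)"
    by (simp only: add_mult_distrib_mat[OF smult_carrier_mat[OF PR] smult_carrier_mat[OF PS] Q]
        mult_smult_assoc_mat[OF PR Q] mult_smult_assoc_mat[OF PS Q])
  finally show ?thesis .
qed

lemma SLOCC_orbit_equivalent_pencil_subset:
  assumes P: "P \<in> carrier_mat n n" "det P = 1" and Q: "Q \<in> carrier_mat n n" "det Q = 1"
    and R: "R \<in> carrier_mat n n" and S: "S \<in> carrier_mat n n"
  shows "SLOCC_orbit n (pencil_state n (P * R * Q) (P * S * Q)) \<subseteq> SLOCC_orbit n (pencil_state n R S)"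
proof
  fix T assume "T \<in> SLOCC_orbit n (pencil_state n (P * R * Q) (P * S * Q))"
  then obtain A B C where G: "(A, B, C) \<in> SLOCC_group n"
    and T: "T = tensor_act n A B C (pencil_state n (P * R * Q) (P * S * Q))"
    unfolding SLOCC_orbit_def by auto
  have B: "B \<in> carrier_mat n n" "det B = 1" and C: "C \<in> carrier_mat n n" "det C = 1"
    using G by (auto simp: SLOCC_group_def)
  have regroup: "B * P * M * transpose_mat (C * transpose_mat Q) = B * (P * M * Q) * transpose_mat C"
    if "M \<in> carrier_mat n n" for M
    using B C P Q that by (simp add: transpose_mult[of C n n] assoc_mult_mat[of _ n n _ n _ n])
  have "T = tensor_act n A (B * P) (C * transpose_mat Q) (pencil_state n R S)"
    using B C P Q R S
    by (simp add: T tensor_act_pencil_state regroup mult_lincomb_mult_mat[of P n n])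
  moreover have "(A, B * P, C * transpose_mat Q) \<in> SLOCC_group n"
    using G B C P Q by (auto simp: SLOCC_group_def det_mult det_transpose)
  ultimately show "T \<in> SLOCC_orbit n (pencil_state n R S)"
    unfolding SLOCC_orbit_def by force
qed

lemma pencil_state_in_SLOCC_orbit:
  assumes "R \<in> carrier_mat n n" "S \<in> carrier_mat n n"
  shows "pencil_state n R S \<in> SLOCC_orbit n (pencil_state n R S)"
proof -
  have "tensor_act n (1\<^sub>m 2) (1\<^sub>m n) (1\<^sub>m n) (pencil_state n R S)
      = pencil_state n (1 \<cdot>\<^sub>m R + 0 \<cdot>\<^sub>m S) (0 \<cdot>\<^sub>m R + 1 \<cdot>\<^sub>m S)"
    using assms by (simp add: tensor_act_pencil_state)
  also have "\<dots> = pencil_state n R S"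
    by (intro ext) (use assms in \<open>auto simp: pencil_state_def\<close>)
  finally have "tensor_act n (1\<^sub>m 2) (1\<^sub>m n) (1\<^sub>m n) (pencil_state n R S) = pencil_state n R S" .
  moreover have "(1\<^sub>m 2, 1\<^sub>m n, 1\<^sub>m n) \<in> SLOCC_group n" by (simp add: SLOCC_group_def)
  ultimately show ?thesis unfolding SLOCC_orbit_def by force
qed

lemma det_mat_diag: "det (mat_diag n f) = (\<Prod>i<n. f i)"
proof -
  have "upper_triangular (mat_diag n f)" by (auto simp: mat_diag_def)
  then have "det (mat_diag n f) = prod_list (diag_mat (mat_diag n f))"
    by (rule det_upper_triangular[OF _ mat_diag_dim])
  also have "\<dots> = (\<Prod>i<n. f i)"
    by (simp add: diag_mat_def mat_diag_def prod.list_conv_set_nth atLeast0LessThan)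
  finally show ?thesis .
qed

section \<open>Degenerating a triangular pencil to its diagonal\<close>

lemma tendsto_pencil_state:
  assumes "\<And>j k. j < n \<Longrightarrow> k < n \<Longrightarrow> ((\<lambda>x. R x $$ (j,k)) \<longlongrightarrow> R0 $$ (j,k)) F"
    and "\<And>j k. j < n \<Longrightarrow> k < n \<Longrightarrow> ((\<lambda>x. S x $$ (j,k)) \<longlongrightarrow> S0 $$ (j,k)) F"
  shows "((\<lambda>x. pencil_state n (R x) (S x)) \<longlongrightarrow> pencil_state n R0 S0) F"
  using assms unfolding tendsto_tensor_iff pencil_state_def by auto

lemma tendsto_scaled_upper_triangular:
  fixes M :: "complex mat"
  assumes M: "M \<in> carrier_mat n n" "upper_triangular M" and jk: "j < n" "k < n"
  shows "((\<lambda>s. complex_of_real (s ^ k / s ^ j) * M $$ (j,k)) \<longlongrightarrow> mat_diag n (\<lambda>i. M $$ (i,i)) $$ (j,k))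
           (at_right 0)"
proof -
  consider "k < j" | "k = j" | "j < k" by linarith
  then show ?thesis
  proof cases
    case 1
    then show ?thesis using M jk by (auto simp: upper_triangular_def mat_diag_def)
  next
    case 2
    have "\<forall>\<^sub>F s in at_right 0. M $$ (j,k) = complex_of_real (s ^ k / s ^ j) * M $$ (j,k)"
      using eventually_at_right_less[of 0] by eventually_elim (simp add: 2)
    then show ?thesis
      by (rule tendsto_cong[THEN iffD1]) (use 2 jk in \<open>simp add: mat_diag_def\<close>)
  next
    case 3
    have "((\<lambda>s. complex_of_real (s ^ (k - j)) * M $$ (j,k)) \<longlongrightarrow> 0) (at_right 0)"
      using 3 by (auto intro!: tendsto_eq_intros)
    moreover have "\<forall>\<^sub>F s in at_right 0.
        complex_of_real (s ^ (k - j)) * M $$ (j,k) = complex_of_real (s ^ k / s ^ j) * M $$ (j,k)"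
      using eventually_at_right_less[of 0] by eventually_elim (use 3 in \<open>simp add: power_diff\<close>)
    ultimately show ?thesis using 3 jk by (simp add: tendsto_cong mat_diag_def)
  qed
qed

(* The one-parameter subgroup diag(s^-j) of the diagonal torus, rescaled into SL(n). *)
definition torus_weight :: "nat \<Rightarrow> real \<Rightarrow> nat \<Rightarrow> complex" where
  "torus_weight n s j = complex_of_real (root n (\<Prod>i<n. s ^ i) / s ^ j)"

lemma prod_torus_weight:
  assumes "n > 0" "s > 0"
  shows "(\<Prod>j<n. torus_weight n s j) = 1"
proof -
  have "(\<Prod>j<n. root n (\<Prod>i<n. s ^ i) / s ^ j) = root n (\<Prod>i<n. s ^ i) ^ n / (\<Prod>j<n. s ^ j)"
    by (simp add: prod_dividef)
  also have "\<dots> = 1" using assms by (simp add: prod_pos prod_nonneg)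
  finally show ?thesis
    unfolding torus_weight_def by (metis of_real_1 of_real_prod)
qed

lemma index_torus_conj:
  assumes n: "n > 0" and s: "s > 0" and M: "M \<in> carrier_mat n n" and jk: "j < n" "k < n"
  shows "(mat_diag n (torus_weight n s) * M * mat_diag n (\<lambda>k. 1 / torus_weight n s k)) $$ (j,k)
           = complex_of_real (s ^ k / s ^ j) * M $$ (j,k)"
proof -
  have "(mat_diag n (torus_weight n s) * M * mat_diag n (\<lambda>k. 1 / torus_weight n s k)) $$ (j,k)
      = torus_weight n s j / torus_weight n s k * M $$ (j,k)"
    using M jk by (simp add: mat_diag_mult_left[OF M] mat_diag_mult_right[of _ n n])
  also have "torus_weight n s j / torus_weight n s k = complex_of_real (s ^ k / s ^ j)"
    using n s by (simp add: torus_weight_def prod_pos field_simps)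
  finally show ?thesis .
qed

lemma tendsto_torus_conj:
  assumes n: "n > 0" and M: "M \<in> carrier_mat n n" "upper_triangular M" and jk: "j < n" "k < n"
  shows "((\<lambda>s. (mat_diag n (torus_weight n s) * M * mat_diag n (\<lambda>k. 1 / torus_weight n s k)) $$ (j,k))
           \<longlongrightarrow> mat_diag n (\<lambda>i. M $$ (i,i)) $$ (j,k)) (at_right 0)"
proof (rule tendsto_cong[THEN iffD1, OF _ tendsto_scaled_upper_triangular[OF M jk]])
  show "\<forall>\<^sub>F s in at_right 0. complex_of_real (s ^ k / s ^ j) * M $$ (j,k)
      = (mat_diag n (torus_weight n s) * M * mat_diag n (\<lambda>k. 1 / torus_weight n s k)) $$ (j,k)"
    using eventually_at_right_less[of 0] by eventually_elim (simp add: index_torus_conj n M(1) jk)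
qed

lemma SLOCC_orbit_diag_pencil_subset_closure:
  assumes n: "n > 0"
    and R: "R \<in> carrier_mat n n" "upper_triangular R" and S: "S \<in> carrier_mat n n" "upper_triangular S"
  shows "SLOCC_orbit n (pencil_state n (mat_diag n (\<lambda>i. R $$ (i,i))) (mat_diag n (\<lambda>i. S $$ (i,i))))
           \<subseteq> closure (SLOCC_orbit n (pencil_state n R S))"
proof
  let ?P = "\<lambda>s. mat_diag n (torus_weight n s)" and ?Q = "\<lambda>s. mat_diag n (\<lambda>k. 1 / torus_weight n s k)"
  fix T
  assume "T \<in> SLOCC_orbit n (pencil_state n (mat_diag n (\<lambda>i. R $$ (i,i))) (mat_diag n (\<lambda>i. S $$ (i,i))))"
  then obtain A B C where G: "(A, B, C) \<in> SLOCC_group n"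
    and T: "T = tensor_act n A B C (pencil_state n (mat_diag n (\<lambda>i. R $$ (i,i))) (mat_diag n (\<lambda>i. S $$ (i,i))))"
    unfolding SLOCC_orbit_def by auto
  let ?T = "\<lambda>s. tensor_act n A B C (pencil_state n (?P s * R * ?Q s) (?P s * S * ?Q s))"
  show "T \<in> closure (SLOCC_orbit n (pencil_state n R S))"
  proof (rule Lim_in_closed_set)
    show "\<forall>\<^sub>F s in at_right 0. ?T s \<in> closure (SLOCC_orbit n (pencil_state n R S))"
      using eventually_at_right_less[of 0]
    proof eventually_elim
      case (elim s)
      have "?T s \<in> SLOCC_orbit n (pencil_state n (?P s * R * ?Q s) (?P s * S * ?Q s))"
        using G unfolding SLOCC_orbit_def by force
      also have "\<dots> \<subseteq> SLOCC_orbit n (pencil_state n R S)"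
        using prod_torus_weight[OF n elim] R S
        by (intro SLOCC_orbit_equivalent_pencil_subset) (simp_all add: det_mat_diag prod_dividef)
      finally show ?case using closure_subset by blast
    qed
    show "(?T \<longlongrightarrow> T) (at_right 0)"
      unfolding T using n R S by (intro tendsto_tensor_act tendsto_pencil_state tendsto_torus_conj) auto
  qed auto
qed

section \<open>Diagonal pencils in an orbit force diagonalisability\<close>

lemma det_2x2:
  assumes A: "A \<in> carrier_mat 2 2"
  shows "det A = A $$ (0,0) * A $$ (1,1) - A $$ (0,1) * A $$ (1,0)"
proof -
  have det_1x1: "det M = M $$ (0,0)" if "M \<in> carrier_mat 1 1" for M :: "'a mat"
    using that laplace_expansion_row[OF that, of 0] by (simp add: cofactor_def mat_delete_def)
  have "det A = A $$ (0,0) * cofactor A 0 0 + A $$ (0,1) * cofactor A 0 1"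
    using laplace_expansion_row[OF A, of 0] by (simp add: numeral_2_eq_2)
  moreover have "cofactor A 0 0 = A $$ (1,1)" and "cofactor A 0 1 = - A $$ (1,0)"
    using A by (auto simp: cofactor_def det_1x1 mat_delete_def)
  ultimately show ?thesis by simp
qed

lemma solve_linear_2x2:
  fixes a b c d x y p q :: "'a::comm_ring_1"
  assumes "a * d - b * c = 1" "p = a * x + b * y" "q = c * x + d * y"
  shows "x = d * p - b * q" "y = a * q - c * p"
proof -
  have "d * p - b * q = (a * d - b * c) * x" "a * q - c * p = (a * d - b * c) * y"
    by (simp_all add: assms(2,3) algebra_simps)
  then show "x = d * p - b * q" "y = a * q - c * p" by (simp_all add: assms(1))
qed

lemma similar_mat_diag_if_two_sided_diag:
  fixes P Q R :: "'a::field mat"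
  assumes P: "P \<in> carrier_mat n n" and Q: "Q \<in> carrier_mat n n" and R: "R \<in> carrier_mat n n"
    and PRQ: "P * R * Q = mat_diag n \<alpha>" and PQ: "P * Q = mat_diag n \<beta>" and \<beta>: "\<And>i. i < n \<Longrightarrow> \<beta> i \<noteq> 0"
  shows "similar_mat R (mat_diag n (\<lambda>i. \<alpha> i / \<beta> i))"
proof -
  define Q' where "Q' = mat_diag n (\<lambda>i. 1 / \<beta> i) * P"
  have Q': "Q' \<in> carrier_mat n n" unfolding Q'_def by (rule mult_carrier_mat[OF mat_diag_dim P])
  have "Q' * Q = mat_diag n (\<lambda>i. 1 / \<beta> i) * (P * Q)"
    unfolding Q'_def by (rule assoc_mult_mat[OF mat_diag_dim P Q])
  also have "\<dots> = mat_diag n (\<lambda>_. 1)"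
    unfolding PQ mat_diag_diag by (rule eq_matI) (simp_all add: mat_diag_def \<beta>)
  finally have Q'Q: "Q' * Q = 1\<^sub>m n" by simp
  have QQ': "Q * Q' = 1\<^sub>m n" by (rule mat_mult_left_right_inverse[OF Q' Q Q'Q])
  have "Q' * R * Q = mat_diag n (\<lambda>i. 1 / \<beta> i) * (P * R * Q)"
    unfolding Q'_def using P Q R by (simp add: assoc_mult_mat[of _ n n _ n _ n])
  also have "\<dots> = mat_diag n (\<lambda>i. \<alpha> i / \<beta> i)" unfolding PRQ by simp
  finally have diag: "Q' * R * Q = mat_diag n (\<lambda>i. \<alpha> i / \<beta> i)" .
  have "R = (Q * Q') * R * (Q * Q')" using R by (simp add: QQ')
  also have "\<dots> = Q * (Q' * R * Q) * Q'" using Q Q' R by (simp add: assoc_mult_mat[of _ n n _ n _ n])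
  finally have "R = Q * mat_diag n (\<lambda>i. \<alpha> i / \<beta> i) * Q'" unfolding diag .
  then have "similar_mat_wit R (mat_diag n (\<lambda>i. \<alpha> i / \<beta> i)) Q Q'"
    using QQ' Q'Q R Q Q' by (intro similar_mat_witI) auto
  then show ?thesis unfolding similar_mat_def by blast
qed

lemma mat_diag_if_unimodular_combinations:
  fixes X Y :: "'a::comm_ring_1 mat"
  assumes XY: "X \<in> carrier_mat n n" "Y \<in> carrier_mat n n" and det: "a * d - b * c = 1"
    and comb: "mat_diag n \<alpha> = a \<cdot>\<^sub>m X + b \<cdot>\<^sub>m Y" "1\<^sub>m n = c \<cdot>\<^sub>m X + d \<cdot>\<^sub>m Y"
  shows "X = mat_diag n (\<lambda>i. d * \<alpha> i - b)" and "Y = mat_diag n (\<lambda>i. a - c * \<alpha> i)"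
proof -
  have "(if i = j then \<alpha> j else 0) = a * X $$ (i,j) + b * Y $$ (i,j)"
    "(if i = j then 1 else 0) = c * X $$ (i,j) + d * Y $$ (i,j)"
    if "i < n" "j < n" for i j
    using arg_cong[OF comb(1), of "\<lambda>M. M $$ (i,j)"] arg_cong[OF comb(2), of "\<lambda>M. M $$ (i,j)"] that XY
    by (simp_all add: mat_diag_def)
  note solved = solve_linear_2x2[OF det this]
  show "X = mat_diag n (\<lambda>i. d * \<alpha> i - b)"
    by (rule eq_matI) (use XY solved(1) in \<open>auto simp: mat_diag_def\<close>)
  show "Y = mat_diag n (\<lambda>i. a - c * \<alpha> i)"
    by (rule eq_matI) (use XY solved(2) in \<open>auto simp: mat_diag_def\<close>)
qed

lemma similar_mat_diag_if_diag_pencil_in_orbit: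
  assumes R: "R \<in> carrier_mat n n"
    and orbit: "pencil_state n (mat_diag n \<alpha>) (1\<^sub>m n) \<in> SLOCC_orbit n (pencil_state n R (1\<^sub>m n))"
  shows "\<exists>\<gamma>. similar_mat R (mat_diag n \<gamma>)"
proof -
  obtain A B C where G: "(A, B, C) \<in> SLOCC_group n"
    and eq: "pencil_state n (mat_diag n \<alpha>) (1\<^sub>m n) = tensor_act n A B C (pencil_state n R (1\<^sub>m n))"
    using orbit unfolding SLOCC_orbit_def by auto
  have A: "A \<in> carrier_mat 2 2" "det A = 1" and B: "B \<in> carrier_mat n n" "det B = 1"
    and C: "C \<in> carrier_mat n n" "det C = 1"
    using G by (auto simp: SLOCC_group_def)
  define X where "X = B * R * transpose_mat C"
  define Y where "Y = B * transpose_mat C"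
  have XY: "X \<in> carrier_mat n n" "Y \<in> carrier_mat n n" unfolding X_def Y_def using B C R by auto
  have lin: "B * (c \<cdot>\<^sub>m R + d \<cdot>\<^sub>m 1\<^sub>m n) * transpose_mat C = c \<cdot>\<^sub>m X + d \<cdot>\<^sub>m Y" for c d
    unfolding X_def Y_def using B C R by (simp add: mult_lincomb_mult_mat[of B n n])
  have "mat_diag n \<alpha> = A $$ (0,0) \<cdot>\<^sub>m X + A $$ (0,1) \<cdot>\<^sub>m Y"
    and "1\<^sub>m n = A $$ (1,0) \<cdot>\<^sub>m X + A $$ (1,1) \<cdot>\<^sub>m Y"
    using eq B C R XY by (simp_all add: tensor_act_pencil_state lin pencil_state_inject)
  moreover have "A $$ (0,0) * A $$ (1,1) - A $$ (0,1) * A $$ (1,0) = 1" using A det_2x2[OF A(1)] by simp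
  ultimately have X_diag: "X = mat_diag n (\<lambda>i. A $$ (1,1) * \<alpha> i - A $$ (0,1))"
    and Y_diag: "Y = mat_diag n (\<lambda>i. A $$ (0,0) - A $$ (1,0) * \<alpha> i)"
    using mat_diag_if_unimodular_combinations[OF XY] by blast+
  have "det Y = 1" unfolding Y_def using B C by (simp add: det_mult det_transpose)
  then have "(\<Prod>i<n. A $$ (0,0) - A $$ (1,0) * \<alpha> i) = 1"
    by (simp add: Y_diag det_mat_diag)
  then have nonzero: "A $$ (0,0) - A $$ (1,0) * \<alpha> i \<noteq> 0" if "i < n" for i
    using that prod_zero_iff[of "{..<n}" "\<lambda>i. A $$ (0,0) - A $$ (1,0) * \<alpha> i"] by auto
  show ?thesis
    by (rule exI, rule similar_mat_diag_if_two_sided_diag[OF B(1) _ R X_diag[unfolded X_def]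
          Y_diag[unfolded Y_def]]) (use C nonzero in auto)
qed

section \<open>Determinant estimates\<close>

lemma norm_det_le:
  fixes M :: "complex mat"
  assumes M: "M \<in> carrier_mat n n" and bound: "\<And>i j. i < n \<Longrightarrow> j < n \<Longrightarrow> cmod (M $$ (i,j)) \<le> c"
  shows "cmod (det M) \<le> fact n * c ^ n"
proof -
  have "cmod (det M) = cmod (\<Sum>p | p permutes {0..<n}. signof p * (\<Prod>i = 0..<n. M $$ (i, p i)))"
    using det_def'[OF M] by simp
  also have "\<dots> \<le> (\<Sum>p | p permutes {0..<n}. cmod (signof p * (\<Prod>i = 0..<n. M $$ (i, p i))))"
    by (rule norm_sum)
  also have "\<dots> \<le> (\<Sum>p | p permutes {0..<n}. c ^ n)"
  proof (rule sum_mono)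
    fix p assume "p \<in> {p. p permutes {0..<n}}"
    then have p: "p permutes {0..<n}" by simp
    have "cmod (\<Prod>i = 0..<n. M $$ (i, p i)) = (\<Prod>i = 0..<n. cmod (M $$ (i, p i)))"
      by (rule prod_norm[symmetric])
    also have "\<dots> \<le> (\<Prod>i = 0..<n. c)"
      using bound permutes_in_image[OF p] by (intro prod_mono) auto
    finally show "cmod (signof p * (\<Prod>i = 0..<n. M $$ (i, p i))) \<le> c ^ n"
      by (cases rule: sign_cases[of p]) (auto simp: norm_mult)
  qed
  also have "\<dots> = fact n * c ^ n"
    using card_permutations[of "{0..<n}" n] by simp
  finally show ?thesis .
qed

lemma affine_not_small_at_separated_points:
  fixes v0 v1 :: complex and t t' :: real
  assumes N: "N \<ge> 1" and t: "t \<in> {0..1}" "t' \<in> {0..1}" and sep: "1 / real N \<le> \<bar>t - t'\<bar>"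
    and small: "cmod (v0 + of_real t * v1) < max (cmod v0) (cmod v1) / (4 * real N)"
  shows "max (cmod v0) (cmod v1) / (4 * real N) \<le> cmod (v0 + of_real t' * v1)"
proof (rule ccontr)
  let ?M = "max (cmod v0) (cmod v1)"
  assume "\<not> ?thesis"
  then have small': "cmod (v0 + of_real t' * v1) < ?M / (4 * real N)" by simp
  have "(v0 + of_real t * v1) - (v0 + of_real t' * v1) = of_real (t - t') * v1"
    by (simp add: algebra_simps)
  then have "\<bar>t - t'\<bar> * cmod v1 = cmod ((v0 + of_real t * v1) - (v0 + of_real t' * v1))"
    by (metis norm_mult norm_of_real)
  also have "\<dots> < ?M / (2 * real N)"
    using norm_triangle_ineq4[of "v0 + of_real t * v1" "v0 + of_real t' * v1"] small small' by simp
  finally have "cmod v1 / real N < ?M / (2 * real N)"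
    using mult_right_mono[OF sep norm_ge_zero[of v1]] by simp
  then have v1: "cmod v1 < ?M / 2" using N by (simp add: field_simps)
  have "cmod v0 \<le> cmod (v0 + of_real t * v1) + cmod (of_real t * v1)"
    using norm_triangle_ineq4[of "v0 + of_real t * v1" "of_real t * v1"] by simp
  also have "\<dots> \<le> cmod (v0 + of_real t * v1) + cmod v1"
    using t by (simp add: norm_mult mult_left_le_one_le)
  also have "\<dots> < ?M / (4 * real N) + ?M / 2"
    using small v1 by simp
  also have "\<dots> \<le> ?M / 4 + ?M / 2"
    using N by (intro add_mono divide_left_mono) (auto simp: le_max_iff_disj)
  finally have v0: "cmod v0 < ?M / 4 + ?M / 2" .
  show False
    using v0 v1 by (cases "cmod v0 \<le> cmod v1") (simp_all add: max_def)
qed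


lemma exists_grid_point_avoiding_small_values:
  fixes v0 v1 :: "nat \<Rightarrow> complex"
  assumes N: "N \<ge> 1"
  shows "\<exists>i\<le>N. \<forall>j<N. max (cmod (v0 j)) (cmod (v1 j)) / (4 * real N)
                         \<le> cmod (v0 j + of_real (real i / real N) * v1 j)"
proof -
  define bad where "bad j = {i \<in> {0..N}. cmod (v0 j + of_real (real i / real N) * v1 j)
                                       < max (cmod (v0 j)) (cmod (v1 j)) / (4 * real N)}" for j
  have "card (bad j) \<le> 1" for j
  proof -
    have "i = i'" if "i \<in> bad j" "i' \<in> bad j" for i i'
    proof (rule ccontr)
      assume "i \<noteq> i'"
      then have "1 / real N \<le> \<bar>real i / real N - real i' / real N\<bar>"
        using N by (simp add: diff_divide_distrib[symmetric] divide_right_mono)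
      moreover have "real i / real N \<in> {0..1}" "real i' / real N \<in> {0..1}"
        using that N unfolding bad_def by auto
      ultimately show False
        using affine_not_small_at_separated_points[OF N, of "real i / real N" "real i' / real N" "v0 j" "v1 j"]
          that unfolding bad_def by auto
    qed
    then show ?thesis using card_le_Suc0_iff_eq[of "bad j"] bad_def by auto
  qed
  then have "card (\<Union>j<N. bad j) \<le> N"
    using card_UN_le[of "{..<N}" bad] sum_mono[of "{..<N}" "\<lambda>j. card (bad j)" "\<lambda>_. 1"] by simp
  then have "\<not> {0..N} \<subseteq> (\<Union>j<N. bad j)"
    using card_mono[of "\<Union>j<N. bad j" "{0..N}"] unfolding bad_def by auto
  then obtain i where "i \<in> {0..N}" "\<forall>j<N. i \<notin> bad j" by blast
  then show ?thesis unfolding bad_def by (auto intro!: exI[of _ i])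
qed

lemma exists_combination_prod_lower_bound:
  fixes v0 v1 :: "nat \<Rightarrow> complex"
  assumes n: "n > 0"
  shows "\<exists>z. cmod z \<le> 1 \<and> (\<Prod>j<n. max (cmod (v0 j)) (cmod (v1 j)))
                             \<le> (4 * real n) ^ n * (\<Prod>j<n. cmod (v0 j + z * v1 j))"
proof -
  obtain i where i: "i \<le> n"
    and large: "\<forall>j<n. max (cmod (v0 j)) (cmod (v1 j)) / (4 * real n)
                        \<le> cmod (v0 j + of_real (real i / real n) * v1 j)"
    using exists_grid_point_avoiding_small_values[of n v0 v1] n by auto
  have "(\<Prod>j<n. max (cmod (v0 j)) (cmod (v1 j))) / (4 * real n) ^ n
      = (\<Prod>j<n. max (cmod (v0 j)) (cmod (v1 j)) / (4 * real n))"
    by (simp add: prod_dividef)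
  also have "\<dots> \<le> (\<Prod>j<n. cmod (v0 j + of_real (real i / real n) * v1 j))"
    using large by (intro prod_mono) (auto intro!: divide_nonneg_nonneg simp: le_max_iff_disj)
  finally have lower: "(\<Prod>j<n. max (cmod (v0 j)) (cmod (v1 j))) / (4 * real n) ^ n
      \<le> (\<Prod>j<n. cmod (v0 j + of_real (real i / real n) * v1 j))" .
  have "cmod (of_real (real i / real n)) \<le> 1"
    using i n by (simp only: norm_of_real) simp
  with lower n show ?thesis
    by (intro exI[of _ "of_real (real i / real n)"] conjI) (simp_all add: field_simps)
qed

section \<open>Null cones of triangular and diagonal pencils\<close>

(* z stands for the coefficient vector (z, 1) of the 1 x 1 pencil M^1(z) = z mu + lambda,
   on which the SL(2) factor A acts. *)
definition image_max_norm :: "complex mat \<Rightarrow> complex \<Rightarrow> real" where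
  "image_max_norm A z = max (cmod (A $$ (0,0) * z + A $$ (0,1))) (cmod (A $$ (1,0) * z + A $$ (1,1)))"

lemma image_max_norm_pos:
  assumes "A \<in> carrier_mat 2 2" "det A = 1"
  shows "0 < image_max_norm A z"
proof (rule ccontr)
  assume "\<not> 0 < image_max_norm A z"
  then have "A $$ (0,1) = - A $$ (0,0) * z" "A $$ (1,1) = - A $$ (1,0) * z"
    unfolding image_max_norm_def by (auto simp: max_def add_eq_0_iff split: if_splits)
  then show False using assms det_2x2[OF assms(1)] by (simp add: algebra_simps)
qed

lemma det_pencil_upper_triangular:
  assumes R: "R \<in> carrier_mat n n" "upper_triangular R"
    and B: "B \<in> carrier_mat n n" "det B = 1" and C: "C \<in> carrier_mat n n" "det C = 1"
  shows "det (B * (c \<cdot>\<^sub>m R + d \<cdot>\<^sub>m 1\<^sub>m n) * transpose_mat C) = (\<Prod>j<n. c * R $$ (j,j) + d)"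
proof -
  let ?M = "c \<cdot>\<^sub>m R + d \<cdot>\<^sub>m 1\<^sub>m n"
  have M: "?M \<in> carrier_mat n n" using R by simp
  have "upper_triangular ?M" using R by (auto simp: upper_triangular_def)
  then have "det ?M = prod_list (diag_mat ?M)" by (rule det_upper_triangular[OF _ M])
  also have "\<dots> = (\<Prod>j<n. c * R $$ (j,j) + d)"
    using R by (simp add: diag_mat_def prod.list_conv_set_nth atLeast0LessThan)
  finally have "det ?M = (\<Prod>j<n. c * R $$ (j,j) + d)" .
  then show ?thesis
    using B C M by (simp add: det_mult[of _ n] det_transpose)
qed

lemma norm_prod_pencil_combination_le:
  assumes R: "R \<in> carrier_mat n n" "upper_triangular R" and G: "(A, B, C) \<in> SLOCC_group n"
    and small: "\<And>a j k. a < 2 \<Longrightarrow> j < n \<Longrightarrow> k < n \<Longrightarrow>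
      cmod (tensor_act n A B C (pencil_state n R (1\<^sub>m n)) a j k) \<le> \<eta>"
    and z: "cmod z \<le> 1"
  shows "(\<Prod>j<n. cmod ((A $$ (0,0) * R $$ (j,j) + A $$ (0,1)) + z * (A $$ (1,0) * R $$ (j,j) + A $$ (1,1))))
           \<le> fact n * (2 * \<eta>) ^ n"
proof -
  have B: "B \<in> carrier_mat n n" "det B = 1" and C: "C \<in> carrier_mat n n" "det C = 1"
    using G by (auto simp: SLOCC_group_def)
  let ?T = "tensor_act n A B C (pencil_state n R (1\<^sub>m n))"
  define X where "X = B * R * transpose_mat C"
  define Y where "Y = B * transpose_mat C"
  have XY: "X \<in> carrier_mat n n" "Y \<in> carrier_mat n n" unfolding X_def Y_def using B C R by auto
  have lin: "B * (c \<cdot>\<^sub>m R + d \<cdot>\<^sub>m 1\<^sub>m n) * transpose_mat C = c \<cdot>\<^sub>m X + d \<cdot>\<^sub>m Y" for c d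
    unfolding X_def Y_def using B C R by (simp add: mult_lincomb_mult_mat[of B n n])
  define M where "M = B * ((A $$ (0,0) + z * A $$ (1,0)) \<cdot>\<^sub>m R + (A $$ (0,1) + z * A $$ (1,1)) \<cdot>\<^sub>m 1\<^sub>m n)
                        * transpose_mat C"
  have M: "M \<in> carrier_mat n n" unfolding M_def using B C R by (intro mult_carrier_mat) auto
  have T: "?T = pencil_state n (A $$ (0,0) \<cdot>\<^sub>m X + A $$ (0,1) \<cdot>\<^sub>m Y) (A $$ (1,0) \<cdot>\<^sub>m X + A $$ (1,1) \<cdot>\<^sub>m Y)"
    using B C R by (simp add: tensor_act_pencil_state lin)
  have "M $$ (j,k) = ?T 0 j k + z * ?T 1 j k" if "j < n" "k < n" for j k
    using that XY unfolding M_def lin T by (simp add: pencil_state_def algebra_simps)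
  then have "cmod (M $$ (j,k)) \<le> 2 * \<eta>" if "j < n" "k < n" for j k
    using that small[of 0 j k] small[of 1 j k] z norm_triangle_ineq[of "?T 0 j k" "z * ?T 1 j k"]
      mult_mono[OF z small[of 1 j k]]
    by (simp add: norm_mult)
  then have "cmod (det M) \<le> fact n * (2 * \<eta>) ^ n" by (rule norm_det_le[OF M])
  moreover have "det M = (\<Prod>j<n. (A $$ (0,0) * R $$ (j,j) + A $$ (0,1)) + z * (A $$ (1,0) * R $$ (j,j) + A $$ (1,1)))"
    unfolding M_def using R B C by (simp add: det_pencil_upper_triangular algebra_simps)
  ultimately show ?thesis by (simp add: prod_norm)
qed

lemma small_image_norms_if_null_cone:
  assumes n: "n > 0" and R: "R \<in> carrier_mat n n" "upper_triangular R"
    and null: "in_null_cone n (pencil_state n R (1\<^sub>m n))" and \<epsilon>: "\<epsilon> > 0"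
  shows "\<exists>A\<in>carrier_mat 2 2. det A = 1 \<and> (\<Prod>j<n. image_max_norm A (R $$ (j,j))) < \<epsilon>"
proof -
  \<comment> \<open>K = (4n)^n n! 2^n: the grid bound times the Leibniz bound for entries of size 2\<eta>.\<close>
  define K where "K = fact n * (8 * real n) ^ n"
  define \<eta> where "\<eta> = root n (\<epsilon> / (K + 1))"
  have K: "K > 0" unfolding K_def using n by simp
  have \<eta>: "\<eta> > 0" unfolding \<eta>_def using n K \<epsilon> by simp
  have "K * \<eta> ^ n = K * \<epsilon> / (K + 1)" unfolding \<eta>_def using n K \<epsilon> by simp
  also have "\<dots> < \<epsilon>" using K \<epsilon> by (simp add: field_simps)
  finally have K\<eta>: "K * \<eta> ^ n < \<epsilon>" .
  obtain T where "T \<in> SLOCC_orbit n (pencil_state n R (1\<^sub>m n))"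
    and small: "\<forall>a<2. \<forall>j<n. \<forall>k<n. cmod (T a j k) < \<eta>"
    using null \<eta> unfolding in_null_cone_iff by blast
  then obtain A B C where G: "(A, B, C) \<in> SLOCC_group n"
    and T: "T = tensor_act n A B C (pencil_state n R (1\<^sub>m n))"
    unfolding SLOCC_orbit_def by auto
  obtain z where z: "cmod z \<le> 1"
    and lower: "(\<Prod>j<n. image_max_norm A (R $$ (j,j)))
      \<le> (4 * real n) ^ n * (\<Prod>j<n. cmod ((A $$ (0,0) * R $$ (j,j) + A $$ (0,1))
                                       + z * (A $$ (1,0) * R $$ (j,j) + A $$ (1,1))))"
    using exists_combination_prod_lower_bound[OF n, of "\<lambda>j. A $$ (0,0) * R $$ (j,j) + A $$ (0,1)"
        "\<lambda>j. A $$ (1,0) * R $$ (j,j) + A $$ (1,1)"]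
    unfolding image_max_norm_def by blast
  have "(\<Prod>j<n. cmod ((A $$ (0,0) * R $$ (j,j) + A $$ (0,1)) + z * (A $$ (1,0) * R $$ (j,j) + A $$ (1,1))))
      \<le> fact n * (2 * \<eta>) ^ n"
    by (rule norm_prod_pencil_combination_le[OF R G _ z]) (use small T in \<open>auto simp: less_imp_le\<close>)
  with lower have "(\<Prod>j<n. image_max_norm A (R $$ (j,j))) \<le> (4 * real n) ^ n * (fact n * (2 * \<eta>) ^ n)"
    by (meson mult_left_mono order_trans zero_le_power of_nat_0_le_iff mult_nonneg_nonneg zero_le_numeral)
  also have "\<dots> = K * \<eta> ^ n"
  proof -
    have eight: "(4::real) ^ n * 2 ^ n = 8 ^ n" by (simp flip: power_mult_distrib)
    show ?thesis unfolding K_def by (simp add: power_mult_distrib eight[symmetric] mult_ac)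
  qed
  finally show ?thesis
    using K\<eta> G by (auto simp: SLOCC_group_def)
qed

lemma tensor_act_diag_pencil:
  assumes "a < 2" "j < n" "k < n"
  shows "tensor_act n A (mat_diag n u) (1\<^sub>m n) (pencil_state n (mat_diag n \<delta>) (1\<^sub>m n)) a j k
           = (if j = k then u j * (A $$ (a,0) * \<delta> j + A $$ (a,1)) else 0)"
proof -
  have lincomb: "c \<cdot>\<^sub>m mat_diag n \<delta> + d \<cdot>\<^sub>m 1\<^sub>m n = mat_diag n (\<lambda>j. c * \<delta> j + d)" for c d
    by (rule eq_matI) (auto simp: mat_diag_def)
  have "tensor_act n A (mat_diag n u) (1\<^sub>m n) (pencil_state n (mat_diag n \<delta>) (1\<^sub>m n)) = pencil_state n
      (mat_diag n u * (A $$ (0,0) \<cdot>\<^sub>m mat_diag n \<delta> + A $$ (0,1) \<cdot>\<^sub>m 1\<^sub>m n) * transpose_mat (1\<^sub>m n))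
      (mat_diag n u * (A $$ (1,0) \<cdot>\<^sub>m mat_diag n \<delta> + A $$ (1,1) \<cdot>\<^sub>m 1\<^sub>m n) * transpose_mat (1\<^sub>m n))"
    by (rule tensor_act_pencil_state) simp_all
  then show ?thesis
    unfolding lincomb mat_diag_diag transpose_one right_mult_one_mat[OF mat_diag_dim]
    using assms by (auto simp: pencil_state_def mat_diag_def less_2_cases_iff)
qed

lemma null_cone_diag_pencil_if_small_image_norms:
  assumes n: "n > 0"
    and small: "\<And>\<epsilon>. \<epsilon> > 0 \<Longrightarrow> \<exists>A\<in>carrier_mat 2 2. det A = 1 \<and> (\<Prod>j<n. image_max_norm A (\<delta> j)) < \<epsilon>"
  shows "in_null_cone n (pencil_state n (mat_diag n \<delta>) (1\<^sub>m n))"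
  unfolding in_null_cone_iff
proof (intro allI impI)
  fix \<eta> :: real assume \<eta>: "\<eta> > 0"
  obtain A where A: "A \<in> carrier_mat 2 2" "det A = 1"
    and prod_small: "(\<Prod>j<n. image_max_norm A (\<delta> j)) < \<eta> ^ n"
    using small[of "\<eta> ^ n"] \<eta> by auto
  define W where "W j = image_max_norm A (\<delta> j)" for j
  have W: "W j > 0" for j unfolding W_def using image_max_norm_pos[OF A] .
  define r where "r = root n (\<Prod>j<n. W j)"
  have r: "r > 0" "r ^ n = (\<Prod>j<n. W j)"
    unfolding r_def using n W by (simp_all add: prod_pos less_imp_le)
  have "r < root n (\<eta> ^ n)"
    unfolding r_def W_def using n prod_small by (rule real_root_less_mono)
  then have r_\<eta>: "r < \<eta>" using n \<eta> by (simp add: real_root_power_cancel)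
  define u where "u j = complex_of_real (r / W j)" for j
  have "(\<Prod>j<n. u j) = complex_of_real (r ^ n / (\<Prod>j<n. W j))"
    unfolding u_def by (simp add: prod_dividef)
  moreover have "W j \<noteq> 0" for j using W[of j] by simp
  ultimately have "(\<Prod>j<n. u j) = 1" using r by simp
  then have G: "(A, mat_diag n u, 1\<^sub>m n) \<in> SLOCC_group n"
    using A by (simp add: SLOCC_group_def det_mat_diag)
  let ?T = "tensor_act n A (mat_diag n u) (1\<^sub>m n) (pencil_state n (mat_diag n \<delta>) (1\<^sub>m n))"
  have orbit: "?T \<in> SLOCC_orbit n (pencil_state n (mat_diag n \<delta>) (1\<^sub>m n))"
    using G unfolding SLOCC_orbit_def by force
  have "cmod (?T a j k) < \<eta>" if "a < 2" "j < n" "k < n" for a j k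
  proof -
    have "cmod (A $$ (a,0) * \<delta> j + A $$ (a,1)) \<le> W j"
      using that unfolding W_def image_max_norm_def by (auto simp: less_2_cases_iff)
    then have "cmod (u j * (A $$ (a,0) * \<delta> j + A $$ (a,1))) \<le> r / W j * W j"
      using W[of j] r unfolding u_def norm_mult norm_of_real by (intro mult_mono) auto
    also have "\<dots> = r" using W[of j] by simp
    finally show ?thesis using tensor_act_diag_pencil[OF that] r_\<eta> \<eta> by auto
  qed
  with orbit show "\<exists>T'\<in>SLOCC_orbit n (pencil_state n (mat_diag n \<delta>) (1\<^sub>m n)).
      \<forall>a<2. \<forall>j<n. \<forall>k<n. cmod (T' a j k) < \<eta>" by blast
qed

section \<open>Jordan pencils\<close>

definition jordan_diag :: "(nat \<times> 'a) list \<Rightarrow> 'a list" where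
  "jordan_diag bs = concat (map (\<lambda>(k, a). replicate k a) bs)"

lemma length_jordan_diag: "length (jordan_diag bs) = sum_list (map fst bs)"
  unfolding jordan_diag_def by (induct bs) auto

lemma jordan_matrix_diag_entry:
  assumes "i < sum_list (map fst bs)"
  shows "jordan_matrix bs $$ (i,i) = jordan_diag bs ! i"
  using assms
proof (induct bs arbitrary: i)
  case (Cons b bs)
  obtain k a where b: "b = (k, a)" by force
  have i: "i < k + sum_list (map fst bs)" using Cons.prems b by simp
  have diag: "jordan_diag ((k, a) # bs) = replicate k a @ jordan_diag bs"
    unfolding jordan_diag_def by simp
  show ?case
  proof (cases "i < k")
    case True
    then show ?thesis using i unfolding b jordan_matrix_Cons diag
      by (simp add: nth_append jordan_block_def)
  next
    case False
    then have "i - k < sum_list (map fst bs)" using i by simp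
    then show ?thesis using False i Cons.hyps unfolding b jordan_matrix_Cons diag
      by (simp add: nth_append length_jordan_diag)
  qed
qed simp

lemma jordan_diag_concat: "jordan_diag (concat bss) = concat (map jordan_diag bss)"
  unfolding jordan_diag_def by (induct bss) auto

lemma jordan_diag_same_eigenvalue:
  "jordan_diag (map (\<lambda>j. (f j, a)) xs) = replicate (sum_list (map f xs)) a"
  unfolding jordan_diag_def by (induct xs) (auto simp: replicate_add)

lemma jordan_matrix_ones: "jordan_matrix (map (Pair 1) gs) = mat_diag (length gs) (nth gs)"
proof (induct gs)
  case Nil
  show ?case by (rule eq_matI) (simp_all add: jordan_matrix_def mat_diag_def)
next
  case (Cons g gs)
  have N: "sum_list (map fst (map (Pair (1::nat)) gs)) = length gs" by (induct gs) auto
  have "jordan_matrix (map (Pair 1) (g # gs)) = four_block_mat (jordan_block 1 g)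
      (0\<^sub>m 1 (length gs)) (0\<^sub>m (length gs) 1) (mat_diag (length gs) (nth gs))"
    using jordan_matrix_Cons[of 1 g "map (Pair 1) gs"] unfolding N Cons by simp
  also have "\<dots> = mat_diag (length (g # gs)) (nth (g # gs))"
  proof (rule eq_matI)
    fix i j assume "i < dim_row (mat_diag (length (g # gs)) (nth (g # gs)))"
      "j < dim_col (mat_diag (length (g # gs)) (nth (g # gs)))"
    then have ij: "i < Suc (length gs)" "j < Suc (length gs)" by (simp_all add: mat_diag_def)
    show "four_block_mat (jordan_block 1 g) (0\<^sub>m 1 (length gs)) (0\<^sub>m (length gs) 1)
        (mat_diag (length gs) (nth gs)) $$ (i,j) = mat_diag (length (g # gs)) (nth (g # gs)) $$ (i,j)"
      using ij by (cases i; cases j) (simp_all add: mat_diag_def jordan_block_def)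
  qed (simp_all add: mat_diag_def jordan_block_def)
  finally show ?case .
qed

lemma jordan_matrix_not_similar_diag:
  fixes bs :: "(nat \<times> 'a::field) list"
  assumes nz: "0 \<notin> fst ` set bs" and big: "(e, y) \<in> set bs" "e > 1"
  shows "\<not> similar_mat (jordan_matrix bs) (mat_diag (sum_list (map fst bs)) \<gamma>)"
proof
  let ?N = "sum_list (map fst bs)"
  let ?ones = "map (Pair 1) (map \<gamma> [0..<?N])"
  assume sim: "similar_mat (jordan_matrix bs) (mat_diag ?N \<gamma>)"
  have "mat_diag ?N \<gamma> = jordan_matrix ?ones"
    unfolding jordan_matrix_ones by (rule eq_matI) (simp_all add: mat_diag_def)
  then have "jordan_nf (jordan_matrix bs) ?ones"
    using sim unfolding jordan_nf_def by (simp add: image_image image_constant_conv)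
  moreover have "jordan_nf (jordan_matrix bs) bs"
    unfolding jordan_nf_def using nz similar_mat_refl[OF jordan_matrix_carrier] by blast
  ultimately have "set ?ones = set bs" by (rule jordan_nf_unique)
  then have "(e, y) \<in> set ?ones" using big(1) by simp
  then show False using big(2) by auto
qed

lemma jordan_matrix_jordan_diag:
  "jordan_matrix (map (Pair 1) (jordan_diag bs))
     = mat_diag (sum_list (map fst bs)) (\<lambda>i. jordan_matrix bs $$ (i,i))"
  unfolding jordan_matrix_ones length_jordan_diag
  by (rule eq_matI) (simp_all add: mat_diag_def jordan_matrix_diag_entry)

theorem jordan_pencil_semistability:
  fixes bs :: "(nat \<times> complex) list"
  assumes nz: "0 \<notin> fst ` set bs" and big: "(e, y) \<in> set bs" "e > 1"
    and n: "sum_list (map fst bs) = n" "n > 0"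
  defines "\<psi> \<equiv> pencil_state n (jordan_matrix bs) (1\<^sub>m n)"
    and "\<psi>' \<equiv> pencil_state n (jordan_matrix (map (Pair 1) (jordan_diag bs))) (1\<^sub>m n)"
  shows "(semistable n \<psi>' \<longrightarrow> strictly_semistable n \<psi>) \<and> (in_null_cone n \<psi>' \<longrightarrow> in_null_cone n \<psi>)"
proof -
  let ?J = "jordan_matrix bs"
  have J: "?J \<in> carrier_mat n n" using jordan_matrix_carrier[of bs] n by simp
  have J_ut: "upper_triangular ?J"
    by (rule upper_triangularI) (simp add: jordan_matrix_upper_triangular)
  have D: "jordan_matrix (map (Pair 1) (jordan_diag bs)) = mat_diag n (\<lambda>i. ?J $$ (i,i))"
    using jordan_matrix_jordan_diag[of bs] n(1) by simp
  have I: "mat_diag n (\<lambda>i. 1\<^sub>m n $$ (i,i)) = 1\<^sub>m n"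
    by (rule eq_matI) (simp_all add: mat_diag_def)
  have sub: "SLOCC_orbit n \<psi>' \<subseteq> closure (SLOCC_orbit n \<psi>)"
    using SLOCC_orbit_diag_pencil_subset_closure[OF n(2) J J_ut one_carrier_mat upper_triangular_one]
    unfolding \<psi>_def \<psi>'_def D I .
  have "\<psi>' \<in> SLOCC_orbit n \<psi>'"
    unfolding \<psi>'_def D by (rule pencil_state_in_SLOCC_orbit) simp_all
  with sub have in_closure: "\<psi>' \<in> closure (SLOCC_orbit n \<psi>)" by blast
  have closure_sub: "closure (SLOCC_orbit n \<psi>') \<subseteq> closure (SLOCC_orbit n \<psi>)"
    using sub by (rule closure_minimal) simp
  have not_in_orbit: "\<psi>' \<notin> SLOCC_orbit n \<psi>"
  proof
    assume "\<psi>' \<in> SLOCC_orbit n \<psi>"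
    then obtain \<gamma> where "similar_mat ?J (mat_diag n \<gamma>)"
      using similar_mat_diag_if_diag_pencil_in_orbit[OF J] unfolding \<psi>_def \<psi>'_def D by blast
    then show False using jordan_matrix_not_similar_diag[OF nz big] n(1) by simp
  qed
  have null_cone_transfer: "in_null_cone n \<psi>'" if "in_null_cone n \<psi>"
    unfolding \<psi>'_def D
  proof (rule null_cone_diag_pencil_if_small_image_norms[OF n(2)])
    fix \<epsilon> :: real assume "\<epsilon> > 0"
    then show "\<exists>A\<in>carrier_mat 2 2. det A = 1 \<and> (\<Prod>j<n. image_max_norm A (?J $$ (j,j))) < \<epsilon>"
      using small_image_norms_if_null_cone[OF n(2) J J_ut] that unfolding \<psi>_def by blast
  qed
  show ?thesis
  proof (intro conjI impI)
    assume "semistable n \<psi>'"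
    then have "semistable n \<psi>" using null_cone_transfer unfolding semistable_def by blast
    moreover have "\<not> closed (SLOCC_orbit n \<psi>)" using in_closure not_in_orbit closure_closed by blast
    ultimately show "strictly_semistable n \<psi>" unfolding strictly_semistable_def polystable_def by blast
  next
    assume "in_null_cone n \<psi>'"
    then show "in_null_cone n \<psi>" using closure_sub unfolding in_null_cone_def by blast
  qed
qed

theorem mainTheorem9:
  fixes n l :: nat and x :: "nat \<Rightarrow> complex" and r :: "nat \<Rightarrow> nat"
    and e :: "nat \<Rightarrow> nat \<Rightarrow> nat" and m :: "nat \<Rightarrow> nat"
  assumes n2: "n \<ge> 2"
    and distinct: "\<And>i i'. i < l \<Longrightarrow> i' < l \<Longrightarrow> i \<noteq> i' \<Longrightarrow> x i \<noteq> x i'"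
    and r_pos: "\<And>i. i < l \<Longrightarrow> r i \<ge> 1"
    and e_pos: "\<And>i j. i < l \<Longrightarrow> j < r i \<Longrightarrow> e i j > 0"
    and m_def: "\<And>i. m i = (\<Sum>j<r i. e i j)"
    and n_def: "(\<Sum>i<l. m i) = n"
    and some_gt1: "\<exists>i<l. \<exists>j<r i. e i j > 1"
  defines "P \<equiv> M_pencil_sum (concat (map (\<lambda>i. map (\<lambda>j. (e i j, x i)) [0..<r i]) [0..<l]))"
    and "P' \<equiv> M_pencil_sum (concat (map (\<lambda>i. replicate (m i) (1, x i)) [0..<l]))"
  defines "\<psi> \<equiv> pencil_state n (fst P) (snd P)"
    and "\<psi>' \<equiv> pencil_state n (fst P') (snd P')"
  shows "(semistable n \<psi>' \<longrightarrow> strictly_semistable n \<psi>)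
       \<and> (in_null_cone n \<psi>' \<longrightarrow> in_null_cone n \<psi>)"
proof -
  define bs where "bs = concat (map (\<lambda>i. map (\<lambda>j. (e i j, x i)) [0..<r i]) [0..<l])"
  have nz: "0 \<notin> fst ` set bs" using e_pos by (fastforce simp: bs_def)
  obtain i j where ij: "i < l" "j < r i" "e i j > 1" using some_gt1 by blast
  then have big: "(e i j, x i) \<in> set bs"
    unfolding bs_def by (auto intro!: bexI[of _ i] image_eqI[of _ _ j])
  have diag: "jordan_diag bs = concat (map (\<lambda>i. replicate (m i) (x i)) [0..<l])"
    by (simp add: bs_def jordan_diag_concat jordan_diag_same_eigenvalue m_def comp_def
        interv_sum_list_conv_sum_set_nat atLeast0LessThan)
  have n_bs: "sum_list (map fst bs) = n"
    using length_jordan_diag[of bs] n_def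
    by (simp add: diag length_concat comp_def interv_sum_list_conv_sum_set_nat atLeast0LessThan)
  have ones: "concat (map (\<lambda>i. replicate (m i) (1, x i)) [0..<l]) = map (Pair 1) (jordan_diag bs)"
    by (simp add: diag map_concat comp_def)
  have "\<psi> = pencil_state n (jordan_matrix bs) (1\<^sub>m n)"
    unfolding \<psi>_def P_def M_pencil_sum_def bs_def[symmetric] using n_bs by simp
  moreover have "\<psi>' = pencil_state n (jordan_matrix (map (Pair 1) (jordan_diag bs))) (1\<^sub>m n)"
    unfolding \<psi>'_def P'_def M_pencil_sum_def ones
    using n_bs length_jordan_diag[of bs] by (simp add: comp_def sum_list_triv)
  ultimately show ?thesis
    using jordan_pencil_semistability[OF nz big ij(3) n_bs] n2 by simp
qed

end
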